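(* Let $(G,c)$ be a tensor network template. Let $d_{\min}=\min_{e\in E}c_e$, and let $k$ be the minimum cardinality of an edge cut set of $G$. Then $\mathrm{QMF}(G,c)\ge d_{\min}^{\,k}$.
   Context: A tensor network template $(G,c)$ consists of a finite undirected graph $G$ with edge set $E$ whose vertex set is partitioned as $S\sqcup T\sqcup V$. Every element of $S$ (inputs) and every element of $T$ (outputs) is an open end of degree $1$; the elements of $V$ are called vertices. For $u\in S\sqcup T$, $e(u)$ denotes the edge incident to $u$. A capacity function $c:E\to\mathbb{Z}_{>0}$ is given, and to each edge $e$ one associates $\mathbb{C}^{c_e}$ with a fixed basis. At each vertex $v$ of degree $d_v$ an ordering $e(v,1),\dots,e(v,d_v)$ of the incident edge-ends is fixed. A tensor assignment $\mathcal T=(\mathcal T_v)_{v\in V}$ chooses $\mathcal T_v\in\bigotimes_{i=1}^{d_v}\mathbb{C}^{c_{e(v,i)}}$ for each $v$. Let $V_S=\bigotimes_{u\in S}\mathbb{C}^{c_{e(u)}}$ and $V_T=\bigotimes_{u\in T}\mathbb{C}^{c_{e(u)}}$. Contracting the network along all edges gives $\beta(G,c;\mathcal T)\in\mathrm{Hom}(V_S,V_T)$, whose matrix entries are $\langle I_T|\beta|I_S\rangle=\sum_W\prod_{v\in V}(\mathcal T_v)_{W|_v}$. Here $W$ ranges over all assignments of basis indices to all edges that agree with $I_S$ on the input edges and with $I_T$ on the output edges, and $W|_v$ is the tuple of indices on $e(v,1),\dots,e(v,d_v)$. The quantum max-flow is $\mathrm{QMF}(G,c)=\max_{\mathcal T}\operatorname{rank}\beta(G,c;\mathcal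 T)$. An edge cut set is a set $C\subseteq E$ for which there is a partition $S\sqcup T\sqcup V=\bar S\sqcup\bar T$ with $S\subseteq\bar S$, $T\subseteq\bar T$, and $C$ equal to the set of edges having one endpoint in $\bar S$ and the other in $\bar T$. *)

theory Defs
  imports Complex_Main "HOL-Library.Function_Algebras"
begin

text \<open>A tensor network template is given by disjoint finite vertex sets S (inputs),
T (outputs), V (vertices), a finite edge set E of an abstract edge type, an endpoint map
ep (each edge has two, possibly equal, endpoints; multigraphs allowed), and a capacity c.
Edge-ends are pairs (e,b): b = False is the end at fst (ep e), b = True the end at snd (ep e).\<close>

definition ends :: "'e set \<Rightarrow> ('e \<Rightarrow> 'v \<times> 'v) \<Rightarrow> 'v \<Rightarrow> ('e \<times> bool) set" where
  "ends E ep v = {(e, b). e \<in> E \<and> (if b then snd (ep e) = v else fst (ep e) = v)}"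

definition tn_template ::
  "'v set \<Rightarrow> 'v set \<Rightarrow> 'v set \<Rightarrow> 'e set \<Rightarrow> ('e \<Rightarrow> 'v \<times> 'v) \<Rightarrow> ('e \<Rightarrow> nat) \<Rightarrow> bool" where
  "tn_template S T V E ep c \<longleftrightarrow>
     finite S \<and> finite T \<and> finite V \<and> finite E \<and>
     S \<inter> T = {} \<and> S \<inter> V = {} \<and> T \<inter> V = {} \<and>
     (\<forall>e\<in>E. fst (ep e) \<in> S \<union> T \<union> V \<and> snd (ep e) \<in> S \<union> T \<union> V) \<and>
     (\<forall>e\<in>E. c e > 0) \<and>
     (\<forall>u\<in>S \<union> T. card (ends E ep u) = 1)"

definition open_edge :: "'e set \<Rightarrow> ('e \<Rightarrow> 'v \<times> 'v) \<Rightarrow> 'v \<Rightarrow> 'e" where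
  "open_edge E ep u = (THE e. e \<in> E \<and> (fst (ep e) = u \<or> snd (ep e) = u))"

definition edge_indices :: "'e set \<Rightarrow> ('e \<Rightarrow> nat) \<Rightarrow> ('e \<Rightarrow> nat) set" where
  "edge_indices E c = {W. (\<forall>e\<in>E. W e < c e) \<and> (\<forall>e. e \<notin> E \<longrightarrow> W e = 0)}"

text \<open>Basis indices of V_S (U = S) or V_T (U = T) (0 outside U).\<close>
definition open_indices ::
  "'e set \<Rightarrow> ('e \<Rightarrow> 'v \<times> 'v) \<Rightarrow> ('e \<Rightarrow> nat) \<Rightarrow> 'v set \<Rightarrow> ('v \<Rightarrow> nat) set" where
  "open_indices E ep c U = {I. (\<forall>u\<in>U. I u < c (open_edge E ep u)) \<and> (\<forall>u. u \<notin> U \<longrightarrow> I u = 0)}"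

text \<open>A tensor at v is a complex-valued function
of such index tuples (the tuple is indexed by the edge-ends rather than by a fixed ordering
of them, which is the same data).\<close>
definition restrict_to_vertex ::
  "'e set \<Rightarrow> ('e \<Rightarrow> 'v \<times> 'v) \<Rightarrow> ('e \<Rightarrow> nat) \<Rightarrow> 'v \<Rightarrow> ('e \<times> bool \<Rightarrow> nat)" where
  "restrict_to_vertex E ep W v = (\<lambda>x. if x \<in> ends E ep v then W (fst x) else 0)"

definition contraction_entry ::
  "'v set \<Rightarrow> 'v set \<Rightarrow> 'v set \<Rightarrow> 'e set \<Rightarrow> ('e \<Rightarrow> 'v \<times> 'v) \<Rightarrow> ('e \<Rightarrow> nat) \<Rightarrow>
   ('v \<Rightarrow> ('e \<times> bool \<Rightarrow> nat) \<Rightarrow> complex) \<Rightarrow> ('v \<Rightarrow> nat) \<Rightarrow> ('v \<Rightarrow> nat) \<Rightarrow> complex" where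
  "contraction_entry S T V E ep c Tn IT IS =
     (\<Sum>W \<in> {W \<in> edge_indices E c. (\<forall>u\<in>S. W (open_edge E ep u) = IS u) \<and>
                                    (\<forall>u\<in>T. W (open_edge E ep u) = IT u)}.
        \<Prod>v\<in>V. Tn v (restrict_to_vertex E ep W v))"

definition mat_rank :: "'r set \<Rightarrow> 'c set \<Rightarrow> ('r \<Rightarrow> 'c \<Rightarrow> complex) \<Rightarrow> nat" where
  "mat_rank R C M =
     vector_space.dim (\<lambda>(a::complex) (f::'r \<Rightarrow> complex) x. a * f x)
       ((\<lambda>j i. if i \<in> R then M i j else 0) ` C)"

definition QMF ::
  "'v set \<Rightarrow> 'v set \<Rightarrow> 'v set \<Rightarrow> 'e set \<Rightarrow> ('e \<Rightarrow> 'v \<times> 'v) \<Rightarrow> ('e \<Rightarrow> nat) \<Rightarrow> nat" where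
  "QMF S T V E ep c =
     Sup {mat_rank (open_indices E ep c T) (open_indices E ep c S) (contraction_entry S T V E ep c Tn)
          | Tn :: 'v \<Rightarrow> ('e \<times> bool \<Rightarrow> nat) \<Rightarrow> complex. True}"

definition edge_cut_set ::
  "'v set \<Rightarrow> 'v set \<Rightarrow> 'v set \<Rightarrow> 'e set \<Rightarrow> ('e \<Rightarrow> 'v \<times> 'v) \<Rightarrow> 'e set \<Rightarrow> bool" where
  "edge_cut_set S T V E ep C \<longleftrightarrow>
     (\<exists>Sb Tb. Sb \<inter> Tb = {} \<and> Sb \<union> Tb = S \<union> T \<union> V \<and> S \<subseteq> Sb \<and> T \<subseteq> Tb \<and>
        C = {e \<in> E. (fst (ep e) \<in> Sb \<and> snd (ep e) \<in> Tb) \<or> (fst (ep e) \<in> Tb \<and> snd (ep e) \<in> Sb)})"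

end

theory Submission
  imports Defs "HOL-Library.FuncSet"
begin

text \<open>By Ford--Fulkerson augmentation there is an integral unit flow from the inputs to the outputs
  whose value k is the minimum size of an edge cut set, and peeling off flow-carrying paths one at a
  time decomposes it into k edge-disjoint paths from inputs to outputs. Colour the edges of the j-th
  path with colour j and place at each vertex the tensor that is the identity on every colour and
  forces index 0 on uncoloured edges. Choosing the index a j < d_min on colour j at both its input
  and its output, the contracted network maps the d_min^k such inputs to the corresponding outputs
  and kills all mismatched pairs, so its matrix contains a diagonal d_min^k by d_min^k block and has
  rank at least d_min^k.\<close>

lemma sum_indicator_eq_card: "finite A \<Longrightarrow> (\<Sum>x\<in>A. if P x then 1 else 0) = of_nat (card {x \<in> A. P x})"
  by (simp add: sum.inter_filter[symmetric])

lemma prod_indicator: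
  "finite A \<Longrightarrow> (\<Prod>x\<in>A. if P x then 1 else (0::'a::comm_semiring_1)) = (if \<forall>x\<in>A. P x then 1 else 0)"
  by (induction A rule: finite_induct) auto

section \<open>Walks\<close>

definition walk :: "('v \<Rightarrow> 'v \<Rightarrow> bool) \<Rightarrow> nat \<Rightarrow> (nat \<Rightarrow> 'v) \<Rightarrow> bool" where
  "walk R n xs \<longleftrightarrow> (\<forall>i<n. R (xs i) (xs (Suc i)))"

lemma rtranclp_imp_walk: "R\<^sup>*\<^sup>* x y \<Longrightarrow> \<exists>n xs. walk R n xs \<and> xs 0 = x \<and> xs n = y"
  by (auto simp: rtranclp_power relpowp_fun_conv walk_def)

lemma walk_shortcut:
  assumes walk: "walk R n xs" and ij: "i < j" "j \<le> n" and loop: "xs i = xs j"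
  shows "walk R (n - (j - i)) (\<lambda>m. if m \<le> i then xs m else xs (m + (j - i)))"
  unfolding walk_def
proof (intro allI impI)
  fix m assume m: "m < n - (j - i)"
  consider "m < i" | "m = i" | "m > i" by linarith
  then show "R (if m \<le> i then xs m else xs (m + (j - i)))
               (if Suc m \<le> i then xs (Suc m) else xs (Suc m + (j - i)))"
  proof cases
    case 3
    then show ?thesis using walk m unfolding walk_def by auto
  qed (use walk m ij loop in \<open>auto simp: walk_def Suc_diff_le\<close>)
qed

text \<open>A shortest walk from x to y repeats no vertex, since a repetition could be cut out.\<close>
lemma rtranclp_imp_simple_walk:
  assumes "R\<^sup>*\<^sup>* x y"
  obtains n xs where "walk R n xs" "xs 0 = x" "xs n = y" "inj_on xs {..n}"
proof -
  define P where "P n \<longleftrightarrow> (\<exists>xs. walk R n xs \<and> xs 0 = x \<and> xs n = y)" for n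
  have "\<exists>n. P n" using rtranclp_imp_walk[OF assms] unfolding P_def .
  define n where "n = (LEAST n. P n)"
  have "P n" unfolding n_def using \<open>\<exists>n. P n\<close> by (rule LeastI_ex)
  then obtain xs where xs: "walk R n xs" "xs 0 = x" "xs n = y" unfolding P_def by blast
  have shortest: "\<not> P m" if "m < n" for m using not_less_Least[of m P] that unfolding n_def .
  have "xs i \<noteq> xs j" if ij: "i < j" "j \<le> n" for i j
  proof
    assume loop: "xs i = xs j"
    define ys where "ys m = (if m \<le> i then xs m else xs (m + (j - i)))" for m
    have "ys (n - (j - i)) = xs n"
    proof (cases "n - (j - i) \<le> i")
      case True
      then have "j = n" "n - (j - i) = i" using ij by auto
      then show ?thesis using loop by (simp add: ys_def)
    qed (use ij in \<open>simp add: ys_def\<close>)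
    moreover have "walk R (n - (j - i)) ys"
      using walk_shortcut[OF xs(1) ij loop] unfolding ys_def .
    moreover have "ys 0 = x" using xs(2) by (simp add: ys_def)
    ultimately have "P (n - (j - i))" using xs(3) unfolding P_def by blast
    then show False using shortest ij by simp
  qed
  then have "inj_on xs {..n}"
    by (intro inj_onI) (metis atMost_iff linorder_neqE_nat)
  then show thesis by (rule that[OF xs])
qed

lemma walk_edges:
  assumes "walk (\<lambda>x y. \<exists>e. P e x y) n xs"
  obtains es where "\<And>i. i < n \<Longrightarrow> P (es i) (xs i) (xs (Suc i))"
  using assms unfolding walk_def by metis

section \<open>Rank of complex matrices\<close>

lemma vector_space_fun_complex: "vector_space (\<lambda>(a::complex) (f::'r \<Rightarrow> complex) x. a * f x)"
  by unfold_locales (auto simp: fun_eq_iff algebra_simps)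

lemma mat_rank_le_card:
  assumes "finite C"
  shows "mat_rank R C M \<le> card C"
proof -
  interpret vs: vector_space "\<lambda>(a::complex) (f::'r \<Rightarrow> complex) x. a * f x"
    by (rule vector_space_fun_complex)
  have "mat_rank R C M \<le> card ((\<lambda>j i. if i \<in> R then M i j else 0) ` C)"
    unfolding mat_rank_def using assms by (intro vs.dim_le_card) (auto intro: vs.span_base)
  also have "\<dots> \<le> card C" by (rule card_image_le[OF assms])
  finally show ?thesis .
qed

lemma card_le_mat_rank:
  fixes M :: "'r \<Rightarrow> 'c \<Rightarrow> complex"
  assumes "finite C" "g ` A \<subseteq> C" "h ` A \<subseteq> R"
    and diag: "\<And>a b. a \<in> A \<Longrightarrow> b \<in> A \<Longrightarrow> M (h a) (g b) = 0 \<longleftrightarrow> a \<noteq> b"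
  shows "card A \<le> mat_rank R C M"
proof -
  interpret vs: vector_space "\<lambda>(a::complex) (f::'r \<Rightarrow> complex) x. a * f x"
    by (rule vector_space_fun_complex)
  define col where "col j i = (if i \<in> R then M i j else 0)" for j i
  have col_at_row: "col (g b) (h a) = M (h a) (g b)" if "a \<in> A" for a b
    using assms(3) that by (auto simp: col_def)
  have inj: "inj_on (col \<circ> g) A"
  proof (rule inj_onI)
    fix a b assume ab: "a \<in> A" "b \<in> A" "(col \<circ> g) a = (col \<circ> g) b"
    then have "M (h a) (g a) = M (h a) (g b)" using col_at_row by (metis comp_apply)
    then show "a = b" using diag[OF ab(1) ab(1)] diag[OF ab(1) ab(2)] by auto
  qed
  have "vs.independent ((col \<circ> g) ` A)"
    unfolding vs.dependent_explicit
  proof clarify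
    fix t u v assume t: "finite t" "t \<subseteq> (col \<circ> g) ` A"
      and comb: "(\<Sum>w\<in>t. (\<lambda>x. u w * w x)) = 0" and v: "v \<in> t" "u v \<noteq> 0"
    obtain a where a: "a \<in> A" "v = col (g a)" using t v by auto
    have "(\<Sum>w\<in>t. u w * w (h a)) = (\<Sum>w\<in>t. (\<lambda>x. u w * w x)) (h a)"
      by (induction t rule: infinite_finite_induct) auto
    then have "0 = (\<Sum>w\<in>t. u w * w (h a))" using comb by simp
    also have "\<dots> = u v * v (h a) + (\<Sum>w\<in>t - {v}. u w * w (h a))"
      by (rule sum.remove[OF t(1) v(1)])
    also have "(\<Sum>w\<in>t - {v}. u w * w (h a)) = 0"
    proof (rule sum.neutral, rule ballI)
      fix w assume w: "w \<in> t - {v}"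
      then obtain b where b: "b \<in> A" "w = col (g b)" using t by auto
      then show "u w * w (h a) = 0" using w a col_at_row[OF a(1)] diag[OF a(1) b(1)] by auto
    qed
    finally show False using v(2) a col_at_row[OF a(1)] diag[OF a(1) a(1)] by simp
  qed
  moreover have "(col \<circ> g) ` A \<subseteq> col ` C" using assms(2) by auto
  ultimately obtain B where B: "(col \<circ> g) ` A \<subseteq> B" "B \<subseteq> col ` C" "vs.independent B"
      "col ` C \<subseteq> vs.span B"
    using vs.maximal_independent_subset_extend by metis
  have "card A = card ((col \<circ> g) ` A)" using card_image[OF inj] by simp
  also have "\<dots> \<le> card B" using B(1,2) \<open>finite C\<close> by (intro card_mono) (auto intro: finite_subset)
  also have "\<dots> = vs.dim (col ` C)" using B by (intro vs.basis_card_eq_dim)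
  finally show ?thesis unfolding mat_rank_def col_def .
qed

section \<open>Unit flows\<close>

definition incidence :: "('e \<Rightarrow> 'v \<times> 'v) \<Rightarrow> 'e \<Rightarrow> 'v \<Rightarrow> int" where
  "incidence ep e x = (if fst (ep e) = x then 1 else 0) - (if snd (ep e) = x then 1 else 0)"

definition net_outflow :: "'e set \<Rightarrow> ('e \<Rightarrow> 'v \<times> 'v) \<Rightarrow> ('e \<Rightarrow> int) \<Rightarrow> 'v \<Rightarrow> int" where
  "net_outflow E ep f x = (\<Sum>e\<in>E. incidence ep e x * f e)"

definition unit_flow :: "'v set \<Rightarrow> 'e set \<Rightarrow> ('e \<Rightarrow> 'v \<times> 'v) \<Rightarrow> ('e \<Rightarrow> int) \<Rightarrow> bool" where
  "unit_flow V E ep f \<longleftrightarrow> (\<forall>e. f e \<in> {-1, 0, 1}) \<and> (\<forall>v\<in>V. net_outflow E ep f v = 0)"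

definition joins :: "'e set \<Rightarrow> ('e \<Rightarrow> 'v \<times> 'v) \<Rightarrow> 'e \<Rightarrow> 'v \<Rightarrow> 'v \<Rightarrow> bool" where
  "joins E ep e x y \<longleftrightarrow> e \<in> E \<and> x \<noteq> y \<and> (ep e = (x, y) \<or> ep e = (y, x))"

definition orient :: "('e \<Rightarrow> 'v \<times> 'v) \<Rightarrow> 'e \<Rightarrow> 'v \<Rightarrow> 'v \<Rightarrow> int" where
  "orient ep e x y = (if ep e = (x, y) then 1 else -1)"

text \<open>A residual step from x to y pushes one more unit from x to y along an edge without leaving
  {-1, 0, 1}; a carrying step follows an edge that already carries one unit from x to y.\<close>
definition residual :: "'e set \<Rightarrow> ('e \<Rightarrow> 'v \<times> 'v) \<Rightarrow> ('e \<Rightarrow> int) \<Rightarrow> 'v \<Rightarrow> 'v \<Rightarrow> bool" where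
  "residual E ep f x y \<longleftrightarrow> (\<exists>e. joins E ep e x y \<and> \<bar>f e + orient ep e x y\<bar> \<le> 1)"

definition carries :: "'e set \<Rightarrow> ('e \<Rightarrow> 'v \<times> 'v) \<Rightarrow> ('e \<Rightarrow> int) \<Rightarrow> 'v \<Rightarrow> 'v \<Rightarrow> bool" where
  "carries E ep f x y \<longleftrightarrow> (\<exists>e. joins E ep e x y \<and> f e = orient ep e x y)"

definition path_flow :: "('e \<Rightarrow> 'v \<times> 'v) \<Rightarrow> nat \<Rightarrow> (nat \<Rightarrow> 'v) \<Rightarrow> (nat \<Rightarrow> 'e) \<Rightarrow> 'e \<Rightarrow> int" where
  "path_flow ep n xs es e = (\<Sum>i<n. if es i = e then orient ep (es i) (xs i) (xs (Suc i)) else 0)"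

lemma residual_joins: "residual E ep f x y \<Longrightarrow> \<exists>e. joins E ep e x y"
  unfolding residual_def by blast

lemma carries_joins: "carries E ep f x y \<Longrightarrow> \<exists>e. joins E ep e x y"
  unfolding carries_def by blast

lemma joins_edge:
  "e \<in> E \<Longrightarrow> fst (ep e) \<noteq> snd (ep e) \<Longrightarrow>
    joins E ep e (fst (ep e)) (snd (ep e)) \<and> joins E ep e (snd (ep e)) (fst (ep e))"
  by (simp add: joins_def)

lemma orient_edge:
  "fst (ep e) \<noteq> snd (ep e) \<Longrightarrow>
    orient ep e (fst (ep e)) (snd (ep e)) = 1 \<and> orient ep e (snd (ep e)) (fst (ep e)) = -1"
  by (auto simp: orient_def prod_eq_iff)

lemma edge_steps:
  assumes "e \<in> E" "fst (ep e) \<noteq> snd (ep e)" "f e \<in> {-1, 0, 1}"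
  shows "f e \<noteq> 1 \<Longrightarrow> residual E ep f (fst (ep e)) (snd (ep e))"
    and "f e \<noteq> -1 \<Longrightarrow> residual E ep f (snd (ep e)) (fst (ep e))"
    and "f e = 1 \<Longrightarrow> carries E ep f (fst (ep e)) (snd (ep e))"
    and "f e = -1 \<Longrightarrow> carries E ep f (snd (ep e)) (fst (ep e))"
  using assms joins_edge[of e E ep] orient_edge[of ep e]
  unfolding residual_def carries_def by (auto intro!: exI[of _ e])

lemma inj_on_walk_edges:
  assumes inj: "inj_on xs {..n}" and es: "\<And>i. i < n \<Longrightarrow> joins E ep (es i) (xs i) (xs (Suc i))"
  shows "inj_on es {..<n}"
proof -
  have "i = j" if ij: "i < j" "j < n" "es i = es j" for i j
  proof -
    have "xs i \<noteq> xs j" "xs (Suc i) \<noteq> xs (Suc j)" "xs i \<noteq> xs (Suc j)"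
      using inj ij by (auto dest: inj_onD)
    then show ?thesis using es[of i] es[of j] ij by (auto simp: joins_def)
  qed
  then show ?thesis by (intro inj_onI) (metis lessThan_iff linorder_neqE_nat)
qed

lemma sum_net_outflow:
  assumes "finite A"
  shows "(\<Sum>x\<in>A. net_outflow E ep f x)
    = (\<Sum>e\<in>E. ((if fst (ep e) \<in> A then 1 else 0) - (if snd (ep e) \<in> A then 1 else 0)) * f e)"
proof -
  have "(\<Sum>x\<in>A. incidence ep e x) = (if fst (ep e) \<in> A then 1 else 0) - (if snd (ep e) \<in> A then 1 else 0)"
    for e
    unfolding incidence_def sum_subtractf using assms by (simp add: sum.delta)
  moreover have "(\<Sum>x\<in>A. net_outflow E ep f x) = (\<Sum>e\<in>E. \<Sum>x\<in>A. incidence ep e x * f e)"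
    unfolding net_outflow_def by (rule sum.swap)
  ultimately show ?thesis by (simp add: sum_distrib_right[symmetric])
qed

lemma net_outflow_add: "net_outflow E ep (\<lambda>e. f e + g e) x = net_outflow E ep f x + net_outflow E ep g x"
  unfolding net_outflow_def by (simp add: distrib_left sum.distrib)

lemma net_outflow_diff: "net_outflow E ep (\<lambda>e. f e - g e) x = net_outflow E ep f x - net_outflow E ep g x"
  unfolding net_outflow_def by (simp add: right_diff_distrib sum_subtractf)

lemma net_outflow_path_flow:
  assumes "finite E" and es: "\<And>i. i < n \<Longrightarrow> joins E ep (es i) (xs i) (xs (Suc i))"
  shows "net_outflow E ep (path_flow ep n xs es) x
    = (if x = xs 0 then 1 else 0) - (if x = xs n then 1 else 0)"
proof -
  have "net_outflow E ep (path_flow ep n xs es) x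
      = (\<Sum>i<n. \<Sum>e\<in>E. incidence ep e x * (if es i = e then orient ep (es i) (xs i) (xs (Suc i)) else 0))"
    unfolding net_outflow_def path_flow_def sum_distrib_left by (rule sum.swap)
  also have "\<dots> = (\<Sum>i<n. incidence ep (es i) x * orient ep (es i) (xs i) (xs (Suc i)))"
  proof (intro sum.cong refl)
    fix i assume "i \<in> {..<n}"
    then have "es i \<in> E" using es by (simp add: joins_def)
    have "(\<Sum>e\<in>E. incidence ep e x * (if es i = e then orient ep (es i) (xs i) (xs (Suc i)) else 0))
        = (\<Sum>e\<in>E. if es i = e then incidence ep (es i) x * orient ep (es i) (xs i) (xs (Suc i)) else 0)"
      by (rule sum.cong) auto
    then show "(\<Sum>e\<in>E. incidence ep e x * (if es i = e then orient ep (es i) (xs i) (xs (Suc i)) else 0))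
        = incidence ep (es i) x * orient ep (es i) (xs i) (xs (Suc i))"
      using \<open>es i \<in> E\<close> assms(1) by simp
  qed
  also have "\<dots> = (\<Sum>i<n. (if x = xs i then 1 else 0) - (if x = xs (Suc i) then 1 else 0))"
  proof (intro sum.cong refl)
    fix i assume "i \<in> {..<n}"
    then have "xs i \<noteq> xs (Suc i)" "ep (es i) = (xs i, xs (Suc i)) \<or> ep (es i) = (xs (Suc i), xs i)"
      using es by (auto simp: joins_def)
    then show "incidence ep (es i) x * orient ep (es i) (xs i) (xs (Suc i))
        = (if x = xs i then 1 else 0) - (if x = xs (Suc i) then 1 else 0)"
      by (elim conjE disjE) (simp_all add: incidence_def orient_def)
  qed
  also have "\<dots> = (if x = xs 0 then 1 else 0) - (if x = xs n then 1 else 0)"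
    by (rule sum_lessThan_telescope')
  finally show ?thesis .
qed

lemma path_flow_on_path:
  assumes "inj_on es {..<n}" "i < n"
  shows "path_flow ep n xs es (es i) = orient ep (es i) (xs i) (xs (Suc i))"
proof -
  have "path_flow ep n xs es (es i) = (\<Sum>j<n. if j = i then orient ep (es j) (xs j) (xs (Suc j)) else 0)"
    unfolding path_flow_def using assms by (intro sum.cong) (auto dest: inj_onD)
  then show ?thesis using assms(2) by simp
qed

lemma path_flow_off_path: "e \<notin> es ` {..<n} \<Longrightarrow> path_flow ep n xs es e = 0"
  unfolding path_flow_def by (intro sum.neutral) auto

text \<open>Across the boundary of a set closed under residual steps every edge carries one unit outwards.\<close>
lemma sum_net_outflow_residual_closed:
  assumes "finite A" "finite E" and unit: "\<And>e. f e \<in> {-1, 0, 1}"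
    and closed: "\<And>x y. x \<in> A \<Longrightarrow> residual E ep f x y \<Longrightarrow> y \<in> A"
  shows "(\<Sum>x\<in>A. net_outflow E ep f x)
    = int (card {e \<in> E. (fst (ep e) \<in> A \<and> snd (ep e) \<notin> A) \<or> (fst (ep e) \<notin> A \<and> snd (ep e) \<in> A)})"
proof -
  have "((if fst (ep e) \<in> A then 1 else 0) - (if snd (ep e) \<in> A then 1 else 0)) * f e
      = (if (fst (ep e) \<in> A \<and> snd (ep e) \<notin> A) \<or> (fst (ep e) \<notin> A \<and> snd (ep e) \<in> A) then 1 else 0)"
    if e: "e \<in> E" for e
  proof -
    have "f e = 1" if "fst (ep e) \<in> A" "snd (ep e) \<notin> A"
      using closed[OF that(1)] edge_steps(1)[of e E ep f] e unit[of e] that by force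
    moreover have "f e = -1" if "fst (ep e) \<notin> A" "snd (ep e) \<in> A"
      using closed[OF that(2)] edge_steps(2)[of e E ep f] e unit[of e] that by force
    ultimately show ?thesis by auto
  qed
  then show ?thesis
    unfolding sum_net_outflow[OF assms(1)] using assms(2) by (simp add: sum_indicator_eq_card)
qed

lemma sum_net_outflow_carries_closed:
  assumes "finite A" and unit: "\<And>e. f e \<in> {-1, 0, 1}"
    and closed: "\<And>x y. x \<in> A \<Longrightarrow> carries E ep f x y \<Longrightarrow> y \<in> A"
  shows "(\<Sum>x\<in>A. net_outflow E ep f x) \<le> 0"
  unfolding sum_net_outflow[OF assms(1)]
proof (rule sum_nonpos)
  fix e assume e: "e \<in> E"
  have "f e \<noteq> 1" if "fst (ep e) \<in> A" "snd (ep e) \<notin> A"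
    using closed[OF that(1)] edge_steps(3)[of e E ep f] e unit[of e] that by force
  moreover have "f e \<noteq> -1" if "fst (ep e) \<notin> A" "snd (ep e) \<in> A"
    using closed[OF that(2)] edge_steps(4)[of e E ep f] e unit[of e] that by force
  ultimately show "((if fst (ep e) \<in> A then 1 else 0) - (if snd (ep e) \<in> A then 1 else 0)) * f e \<le> 0"
    using unit[of e] by auto
qed

section \<open>Edge-disjoint paths and path tensors\<close>

definition linked :: "'v set \<Rightarrow> ('e \<Rightarrow> 'v \<times> 'v) \<Rightarrow> ('e \<Rightarrow> nat option) \<Rightarrow> 'e \<Rightarrow> 'e \<Rightarrow> bool" where
  "linked V ep lab e e' \<longleftrightarrow> (\<exists>j. lab e = Some j \<and> lab e' = Some j) \<and>
     (\<exists>v\<in>V. (fst (ep e) = v \<or> snd (ep e) = v) \<and> (fst (ep e') = v \<or> snd (ep e') = v))"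

text \<open>Colouring edges with colours below k so that each colour class contains a chain of edges,
  consecutive ones meeting at a vertex, from an input edge to an output edge; these are k
  edge-disjoint paths from S to T.\<close>
definition labelled_paths ::
  "'v set \<Rightarrow> 'v set \<Rightarrow> 'v set \<Rightarrow> 'e set \<Rightarrow> ('e \<Rightarrow> 'v \<times> 'v) \<Rightarrow> ('e \<Rightarrow> nat option) \<Rightarrow> nat \<Rightarrow> bool" where
  "labelled_paths S T V E ep lab k \<longleftrightarrow> (\<forall>e j. lab e = Some j \<longrightarrow> e \<in> E \<and> j < k) \<and>
     (\<forall>j<k. \<exists>s\<in>S. \<exists>t\<in>T. lab (open_edge E ep s) = Some j \<and> lab (open_edge E ep t) = Some j \<and>
        (linked V ep lab)\<^sup>*\<^sup>* (open_edge E ep s) (open_edge E ep t))"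

definition colour_consistent :: "'e set \<Rightarrow> ('e \<Rightarrow> 'v \<times> 'v) \<Rightarrow> ('e \<Rightarrow> nat option) \<Rightarrow> ('e \<times> bool \<Rightarrow> nat) \<Rightarrow> 'v \<Rightarrow> bool" where
  "colour_consistent E ep lab x v \<longleftrightarrow>
     (\<forall>p\<in>ends E ep v. lab (fst p) = None \<longrightarrow> x p = 0) \<and>
     (\<forall>p\<in>ends E ep v. \<forall>q\<in>ends E ep v. lab (fst p) \<noteq> None \<longrightarrow> lab (fst p) = lab (fst q) \<longrightarrow> x p = x q)"

text \<open>The identity tensor on each colour class.\<close>
definition path_tensor :: "'e set \<Rightarrow> ('e \<Rightarrow> 'v \<times> 'v) \<Rightarrow> ('e \<Rightarrow> nat option) \<Rightarrow> 'v \<Rightarrow> ('e \<times> bool \<Rightarrow> nat) \<Rightarrow> complex" where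
  "path_tensor E ep lab v x = (if colour_consistent E ep lab x v then 1 else 0)"

definition colour_index :: "'e set \<Rightarrow> ('e \<Rightarrow> nat option) \<Rightarrow> (nat \<Rightarrow> nat) \<Rightarrow> 'e \<Rightarrow> nat" where
  "colour_index E lab a e = (if e \<in> E then case_option 0 a (lab e) else 0)"

definition boundary_index ::
  "'e set \<Rightarrow> ('e \<Rightarrow> 'v \<times> 'v) \<Rightarrow> ('e \<Rightarrow> nat option) \<Rightarrow> 'v set \<Rightarrow> (nat \<Rightarrow> nat) \<Rightarrow> 'v \<Rightarrow> nat" where
  "boundary_index E ep lab U a u = (if u \<in> U then colour_index E lab a (open_edge E ep u) else 0)"

locale tensor_network =
  fixes S T V :: "'v set" and E :: "'e set" and ep :: "'e \<Rightarrow> 'v \<times> 'v" and c :: "'e \<Rightarrow> nat"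
  assumes tmpl: "tn_template S T V E ep c"
begin

lemma template_finite: "finite S" "finite T" "finite V" "finite E"
  using tmpl by (auto simp: tn_template_def)

lemma template_disjoint: "S \<inter> T = {}" "S \<inter> V = {}" "T \<inter> V = {}"
  using tmpl by (auto simp: tn_template_def)

lemma edge_endpoints: "e \<in> E \<Longrightarrow> fst (ep e) \<in> S \<union> T \<union> V \<and> snd (ep e) \<in> S \<union> T \<union> V"
  using tmpl by (auto simp: tn_template_def)

lemma open_end_single_edge:
  assumes "u \<in> S \<union> T"
  obtains e where "{e \<in> E. fst (ep e) = u \<or> snd (ep e) = u} = {e}"
proof -
  have "card (ends E ep u) = 1" using tmpl assms by (auto simp: tn_template_def)
  then obtain p where p: "ends E ep u = {p}" by (rule card_1_singletonE)
  have "{e \<in> E. fst (ep e) = u \<or> snd (ep e) = u} = fst ` ends E ep u"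
    by (auto simp: ends_def image_def split: if_splits)
  then show thesis using that p by simp
qed

lemma open_edge_unique:
  assumes "u \<in> S \<union> T" "e \<in> E" "fst (ep e) = u \<or> snd (ep e) = u"
  shows "open_edge E ep u = e"
proof -
  obtain e0 where e0: "{e \<in> E. fst (ep e) = u \<or> snd (ep e) = u} = {e0}"
    using open_end_single_edge[OF assms(1)] .
  then have single: "e' = e0" if "e' \<in> E \<and> (fst (ep e') = u \<or> snd (ep e') = u)" for e'
    using that by blast
  have "e = e0" using single assms(2,3) by blast
  then show ?thesis unfolding open_edge_def using assms(2,3) single by blast
qed

lemma open_edge_incident:
  assumes "u \<in> S \<union> T"
  shows "open_edge E ep u \<in> E" "fst (ep (open_edge E ep u)) = u \<or> snd (ep (open_edge E ep u)) = u"
proof -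
  obtain e0 where "{e \<in> E. fst (ep e) = u \<or> snd (ep e) = u} = {e0}"
    using open_end_single_edge[OF assms] .
  then have "e0 \<in> E" "fst (ep e0) = u \<or> snd (ep e0) = u" by auto
  with open_edge_unique[OF assms this] show "open_edge E ep u \<in> E" "fst (ep (open_edge E ep u)) = u \<or> snd (ep (open_edge E ep u)) = u"
    by simp_all
qed

lemma finite_edge_indices: "finite (edge_indices E c)"
proof -
  have "edge_indices E c \<subseteq> {W. \<forall>e. (e \<in> E \<longrightarrow> W e \<in> {..< sum c E}) \<and> (e \<notin> E \<longrightarrow> W e = 0)}"
    unfolding edge_indices_def using member_le_sum[of _ E c] template_finite(4)
    by (auto intro: less_le_trans)
  then show ?thesis by (rule finite_subset) (rule finite_set_of_finite_funs[OF template_finite(4)], simp)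
qed

lemma finite_open_indices:
  assumes "finite U"
  shows "finite (open_indices E ep c U)"
proof -
  have "open_indices E ep c U \<subseteq>
      {I. \<forall>u. (u \<in> U \<longrightarrow> I u \<in> {..< sum (\<lambda>u. c (open_edge E ep u)) U}) \<and> (u \<notin> U \<longrightarrow> I u = 0)}"
    unfolding open_indices_def using member_le_sum[of _ U "\<lambda>u. c (open_edge E ep u)"] assms
    by (auto intro: less_le_trans)
  then show ?thesis by (rule finite_subset) (rule finite_set_of_finite_funs[OF assms], simp)
qed

lemma rtranclp_edge_steps_closed:
  assumes steps: "\<And>x y. R x y \<Longrightarrow> \<exists>e. joins E ep e x y" and "R\<^sup>*\<^sup>* x y" "x \<in> S \<union> T \<union> V"
  shows "y \<in> S \<union> T \<union> V"
  using assms(2,3)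
proof (induction rule: rtranclp_induct)
  case (step y z)
  obtain e where "joins E ep e y z" using steps[OF step(2)] ..
  then have "e \<in> E" "z = fst (ep e) \<or> z = snd (ep e)" by (auto simp: joins_def)
  then show ?case using edge_endpoints by blast
qed

subsection \<open>Ford--Fulkerson\<close>

lemma residual_closed_cut:
  assumes flow: "unit_flow V E ep f" and no_path: "\<And>s t. s \<in> S \<Longrightarrow> t \<in> T \<Longrightarrow> \<not> (residual E ep f)\<^sup>*\<^sup>* s t"
  obtains C where "edge_cut_set S T V E ep C" "int (card C) = (\<Sum>s\<in>S. net_outflow E ep f s)"
proof -
  define A where "A = {y. \<exists>s\<in>S. (residual E ep f)\<^sup>*\<^sup>* s y}"
  define Tb where "Tb = (S \<union> T \<union> V) - A"
  define C where "C = {e \<in> E. (fst (ep e) \<in> A \<and> snd (ep e) \<in> Tb) \<or> (fst (ep e) \<in> Tb \<and> snd (ep e) \<in> A)}"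
  have SA: "S \<subseteq> A" unfolding A_def by blast
  have TA: "A \<inter> T = {}" using no_path unfolding A_def by blast
  have closed: "y \<in> A" if "x \<in> A" "residual E ep f x y" for x y
    using that rtranclp.rtrancl_into_rtrancl unfolding A_def by fastforce
  have A_vertices: "A \<subseteq> S \<union> T \<union> V"
  proof
    fix y assume "y \<in> A"
    then obtain s where "s \<in> S" "(residual E ep f)\<^sup>*\<^sup>* s y" unfolding A_def by blast
    then show "y \<in> S \<union> T \<union> V"
      using rtranclp_edge_steps_closed[of "residual E ep f" s y] residual_joins[of E ep f] by blast
  qed
  then have fA: "finite A" using template_finite(1-3) by (simp add: finite_subset)
  have cut: "edge_cut_set S T V E ep C"
    unfolding edge_cut_set_def
  proof (rule exI[of _ A], rule exI[of _ Tb], intro conjI)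
    show "A \<inter> Tb = {}" "A \<union> Tb = S \<union> T \<union> V" "S \<subseteq> A" "T \<subseteq> Tb"
      using A_vertices SA TA by (auto simp: Tb_def)
  qed (simp add: C_def)
  have "C = {e \<in> E. (fst (ep e) \<in> A \<and> snd (ep e) \<notin> A) \<or> (fst (ep e) \<notin> A \<and> snd (ep e) \<in> A)}"
    using edge_endpoints unfolding C_def Tb_def by blast
  then have "int (card C) = (\<Sum>x\<in>A. net_outflow E ep f x)"
    using sum_net_outflow_residual_closed[OF fA template_finite(4) _ closed] flow by (simp add: unit_flow_def)
  also have "\<dots> = (\<Sum>x\<in>S. net_outflow E ep f x) + (\<Sum>x\<in>A - S. net_outflow E ep f x)"
    using sum.subset_diff[OF SA fA] by (simp add: add.commute)
  also have "(\<Sum>x\<in>A - S. net_outflow E ep f x) = 0"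
    using A_vertices TA flow by (intro sum.neutral) (auto simp: unit_flow_def)
  finally show thesis using that cut by simp
qed

lemma augment_unit_flow:
  assumes flow: "unit_flow V E ep f" and path: "s \<in> S" "t \<in> T" "(residual E ep f)\<^sup>*\<^sup>* s t"
  obtains f' where "unit_flow V E ep f'" "(\<Sum>s\<in>S. net_outflow E ep f' s) = (\<Sum>s\<in>S. net_outflow E ep f s) + 1"
proof -
  obtain n xs where xs: "walk (residual E ep f) n xs" "xs 0 = s" "xs n = t" "inj_on xs {..n}"
    using rtranclp_imp_simple_walk[OF path(3)] .
  obtain es where es: "\<And>i. i < n \<Longrightarrow> joins E ep (es i) (xs i) (xs (Suc i)) \<and>
      \<bar>f (es i) + orient ep (es i) (xs i) (xs (Suc i))\<bar> \<le> 1"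
    using walk_edges[of "\<lambda>e x y. joins E ep e x y \<and> \<bar>f e + orient ep e x y\<bar> \<le> 1"] xs(1)
    unfolding residual_def by blast
  have inj_es: "inj_on es {..<n}" using inj_on_walk_edges[OF xs(4)] es by blast
  define f' where "f' e = f e + path_flow ep n xs es e" for e
  have net: "net_outflow E ep f' x = net_outflow E ep f x + ((if x = xs 0 then 1 else 0) - (if x = xs n then 1 else 0))" for x
  proof -
    have "net_outflow E ep (path_flow ep n xs es) x = (if x = xs 0 then 1 else 0) - (if x = xs n then 1 else 0)"
      by (rule net_outflow_path_flow[OF template_finite(4)]) (use es in blast)
    then show ?thesis unfolding f'_def net_outflow_add by simp
  qed
  have "f' e \<in> {-1, 0, 1}" for e
  proof (cases "e \<in> es ` {..<n}")
    case True
    then obtain i where i: "i < n" "e = es i" by auto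
    then have "f' e = f (es i) + orient ep (es i) (xs i) (xs (Suc i))"
      using path_flow_on_path[OF inj_es i(1)] by (simp add: f'_def)
    then show ?thesis using es[OF i(1)] by auto
  next
    case False
    then have "f' e = f e" unfolding f'_def using path_flow_off_path by simp
    then show ?thesis using flow by (simp add: unit_flow_def)
  qed
  moreover have "\<forall>v\<in>V. net_outflow E ep f' v = 0"
    using flow xs(2,3) path(1,2) template_disjoint net by (auto simp: unit_flow_def)
  moreover have "(\<Sum>s\<in>S. net_outflow E ep f' s) = (\<Sum>s\<in>S. net_outflow E ep f s) + 1"
    using xs(2,3) path(1,2) template_finite(1) template_disjoint(1) by (auto simp: net sum.distrib sum_subtractf)
  ultimately show thesis using that unfolding unit_flow_def by blast
qed

text \<open>Augmenting along residual paths either raises the value of the flow or, when no output is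
  reachable, exhibits an edge cut set whose size is the value.\<close>
lemma unit_flow_of_cut_bound:
  assumes cut_bound: "\<And>C. edge_cut_set S T V E ep C \<Longrightarrow> k \<le> card C"
  shows "\<exists>f. unit_flow V E ep f \<and> (\<Sum>s\<in>S. net_outflow E ep f s) = int k"
proof -
  have "\<exists>f. unit_flow V E ep f \<and> (\<Sum>s\<in>S. net_outflow E ep f s) = int n" if "n \<le> k" for n
    using that
  proof (induction n)
    case 0
    have "unit_flow V E ep (\<lambda>_. 0)" by (simp add: unit_flow_def net_outflow_def)
    then show ?case by (intro exI[of _ "\<lambda>_. 0"]) (simp add: net_outflow_def)
  next
    case (Suc n)
    then obtain f where f: "unit_flow V E ep f" "(\<Sum>s\<in>S. net_outflow E ep f s) = int n" by auto
    show ?case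
    proof (cases "\<exists>s\<in>S. \<exists>t\<in>T. (residual E ep f)\<^sup>*\<^sup>* s t")
      case True
      then obtain s t where "s \<in> S" "t \<in> T" "(residual E ep f)\<^sup>*\<^sup>* s t" by blast
      from augment_unit_flow[OF f(1) this] obtain f' where
        "unit_flow V E ep f'" "(\<Sum>s\<in>S. net_outflow E ep f' s) = (\<Sum>s\<in>S. net_outflow E ep f s) + 1" .
      then show ?thesis using f(2) by auto
    next
      case False
      then have "\<not> (residual E ep f)\<^sup>*\<^sup>* s t" if "s \<in> S" "t \<in> T" for s t
        using that by blast
      then obtain C where "edge_cut_set S T V E ep C" "int (card C) = (\<Sum>s\<in>S. net_outflow E ep f s)"
        by (rule residual_closed_cut[OF f(1)])
      then have "k \<le> n" using cut_bound[of C] f(2) by simp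
      then show ?thesis using Suc.prems by simp
    qed
  qed
  then show ?thesis by blast
qed

subsection \<open>Decomposition of a unit flow into paths\<close>

lemma path_interior_vertex:
  assumes inj: "inj_on es {..<n}" and es: "\<And>i. i < n \<Longrightarrow> joins E ep (es i) (xs i) (xs (Suc i))"
    and i: "Suc i < n"
  shows "xs (Suc i) \<in> V"
proof -
  have e1: "es i \<in> E" "fst (ep (es i)) = xs (Suc i) \<or> snd (ep (es i)) = xs (Suc i)"
    using es[of i] i by (auto simp: joins_def)
  have e2: "es (Suc i) \<in> E" "fst (ep (es (Suc i))) = xs (Suc i) \<or> snd (ep (es (Suc i))) = xs (Suc i)"
    using es[of "Suc i"] i by (auto simp: joins_def)
  have "es i \<noteq> es (Suc i)" using inj i by (auto dest: inj_onD)
  then have "xs (Suc i) \<notin> S \<union> T"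
    using open_edge_unique[OF _ e1] open_edge_unique[OF _ e2] by force
  moreover have "xs (Suc i) \<in> S \<union> T \<union> V" using edge_endpoints[OF e1(1)] e1(2) by auto
  ultimately show ?thesis by blast
qed

lemma path_edges_linked:
  assumes inj: "inj_on es {..<n}" and es: "\<And>i. i < n \<Longrightarrow> joins E ep (es i) (xs i) (xs (Suc i))"
    and coloured: "\<And>i. i < n \<Longrightarrow> lab (es i) = Some j" and "i < n"
  shows "(linked V ep lab)\<^sup>*\<^sup>* (es 0) (es i)"
  using \<open>i < n\<close>
proof (induction i)
  case (Suc i)
  have "xs (Suc i) \<in> V" by (rule path_interior_vertex[OF inj es Suc.prems])
  then have "linked V ep lab (es i) (es (Suc i))"
    using es[of i] es[of "Suc i"] coloured[of i] coloured[of "Suc i"] Suc.prems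
    unfolding linked_def joins_def by (intro conjI bexI[of _ "xs (Suc i)"]) auto
  then show ?case using Suc by (meson Suc_lessD rtranclp.rtrancl_into_rtrancl)
qed simp

lemma labelled_paths_extend:
  assumes lp: "labelled_paths S T V E ep lab k"
    and path: "0 < n" "xs 0 \<in> S" "xs n \<in> T" "inj_on es {..<n}"
      "\<And>i. i < n \<Longrightarrow> joins E ep (es i) (xs i) (xs (Suc i))"
    and fresh: "\<And>i. i < n \<Longrightarrow> lab (es i) = None"
  shows "labelled_paths S T V E ep (\<lambda>e. if e \<in> es ` {..<n} then Some k else lab e) (Suc k)"
proof -
  define lab' where "lab' e = (if e \<in> es ` {..<n} then Some k else lab e)" for e
  have keep: "lab' e = lab e" if "lab e \<noteq> None" for e
    using that fresh by (auto simp: lab'_def)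
  have linked_mono: "linked V ep lab' e e'" if "linked V ep lab e e'" for e e'
    using that keep unfolding linked_def by (metis option.distinct(1))
  have chain: "(linked V ep lab')\<^sup>*\<^sup>* (es 0) (es (n - 1))"
    using path(1) by (intro path_edges_linked[OF path(4,5), of lab' k]) (auto simp: lab'_def)
  have first: "open_edge E ep (xs 0) = es 0"
    using path(2) path(5)[OF path(1)] by (intro open_edge_unique) (auto simp: joins_def)
  have last: "open_edge E ep (xs n) = es (n - 1)"
    using path(3) path(5)[of "n - 1"] path(1) by (intro open_edge_unique) (auto simp: joins_def)
  have new_path: "\<exists>s\<in>S. \<exists>t\<in>T. lab' (open_edge E ep s) = Some k \<and> lab' (open_edge E ep t) = Some k \<and>
      (linked V ep lab')\<^sup>*\<^sup>* (open_edge E ep s) (open_edge E ep t)"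
  proof (rule bexI[OF _ path(2)], rule bexI[OF _ path(3)])
    show "lab' (open_edge E ep (xs 0)) = Some k \<and> lab' (open_edge E ep (xs n)) = Some k \<and>
        (linked V ep lab')\<^sup>*\<^sup>* (open_edge E ep (xs 0)) (open_edge E ep (xs n))"
      using path(1) chain unfolding first last by (auto simp: lab'_def)
  qed
  have old_paths: "\<exists>s\<in>S. \<exists>t\<in>T. lab' (open_edge E ep s) = Some j \<and> lab' (open_edge E ep t) = Some j \<and>
      (linked V ep lab')\<^sup>*\<^sup>* (open_edge E ep s) (open_edge E ep t)" if j: "j < k" for j
  proof -
    obtain s t where "s \<in> S" "t \<in> T" "lab (open_edge E ep s) = Some j" "lab (open_edge E ep t) = Some j"
        "(linked V ep lab)\<^sup>*\<^sup>* (open_edge E ep s) (open_edge E ep t)"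
      using lp j unfolding labelled_paths_def by blast
    moreover have "(linked V ep lab)\<^sup>*\<^sup>* \<le> (linked V ep lab')\<^sup>*\<^sup>*"
      using linked_mono by (intro rtranclp_mono) blast
    ultimately show ?thesis using keep by (intro bexI[of _ s] bexI[of _ t]) auto
  qed
  have "e \<in> E \<and> j < Suc k" if "lab' e = Some j" for e j
  proof (cases "e \<in> es ` {..<n}")
    case True
    then show ?thesis using that path(5) by (auto simp: lab'_def joins_def)
  next
    case False
    then have "lab e = Some j" using that by (simp add: lab'_def)
    then show ?thesis using lp unfolding labelled_paths_def by fastforce
  qed
  then show ?thesis
    using new_path old_paths unfolding labelled_paths_def lab'_def[symmetric] less_Suc_eq by blast
qed

text \<open>Following the flow out of a source with positive net outflow one reaches a sink or a source
  with negative net outflow; otherwise the set reached would have positive net outflow while no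
  flow leaves it.\<close>
lemma carrying_path:
  assumes flow: "unit_flow V E ep f" and s0: "s0 \<in> S" "net_outflow E ep f s0 > 0"
  obtains n xs es where "xs 0 = s0" "0 < n" "xs n \<in> T \<or> xs n \<in> S" "inj_on es {..<n}"
    "\<And>i. i < n \<Longrightarrow> joins E ep (es i) (xs i) (xs (Suc i)) \<and> f (es i) = orient ep (es i) (xs i) (xs (Suc i))"
proof -
  define Z where "Z = T \<union> {s \<in> S. net_outflow E ep f s < 0}"
  have "\<exists>z\<in>Z. (carries E ep f)\<^sup>*\<^sup>* s0 z"
  proof (rule ccontr)
    assume unreachable: "\<not> (\<exists>z\<in>Z. (carries E ep f)\<^sup>*\<^sup>* s0 z)"
    define R where "R = {y. (carries E ep f)\<^sup>*\<^sup>* s0 y}"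
    have closed: "y \<in> R" if "x \<in> R" "carries E ep f x y" for x y
      using that rtranclp.rtrancl_into_rtrancl unfolding R_def by fastforce
    have R_vertices: "R \<subseteq> S \<union> T \<union> V"
      using rtranclp_edge_steps_closed[of "carries E ep f" s0] carries_joins[of E ep f] s0(1)
      unfolding R_def by blast
    then have fR: "finite R" using template_finite(1-3) by (simp add: finite_subset)
    have "s0 \<in> R" by (simp add: R_def)
    have "net_outflow E ep f x \<ge> 0" if "x \<in> R - {s0}" for x
      using that R_vertices unreachable flow unfolding R_def Z_def unit_flow_def by fastforce
    then have "(\<Sum>x\<in>R - {s0}. net_outflow E ep f x) \<ge> 0" by (rule sum_nonneg)
    then have "0 < net_outflow E ep f s0 + (\<Sum>x\<in>R - {s0}. net_outflow E ep f x)"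
      using s0(2) by linarith
    also have "\<dots> = (\<Sum>x\<in>R. net_outflow E ep f x)"
      by (rule sum.remove[OF fR \<open>s0 \<in> R\<close>, symmetric])
    also have "\<dots> \<le> 0"
      by (rule sum_net_outflow_carries_closed[OF fR]) (use flow closed in \<open>auto simp: unit_flow_def\<close>)
    finally show False by simp
  qed
  then obtain z where "z \<in> Z" "(carries E ep f)\<^sup>*\<^sup>* s0 z" by blast
  then obtain n xs where xs: "walk (carries E ep f) n xs" "xs 0 = s0" "xs n \<in> Z" "inj_on xs {..n}"
    using rtranclp_imp_simple_walk[of "carries E ep f" s0 z] by metis
  obtain es where es: "\<And>i. i < n \<Longrightarrow> joins E ep (es i) (xs i) (xs (Suc i)) \<and>
      f (es i) = orient ep (es i) (xs i) (xs (Suc i))"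
    using walk_edges[of "\<lambda>e x y. joins E ep e x y \<and> f e = orient ep e x y"] xs(1)
    unfolding carries_def by blast
  have "n \<noteq> 0" using xs(2,3) s0 template_disjoint(1) by (auto simp: Z_def)
  moreover have "inj_on es {..<n}" using inj_on_walk_edges[OF xs(4)] es by blast
  ultimately show thesis using that xs(2,3) es by (auto simp: Z_def)
qed

lemma unit_flow_remove_path:
  assumes flow: "unit_flow V E ep f" and ends: "0 < n" "xs 0 \<in> S" "xs n \<in> S \<union> T"
    and inj: "inj_on es {..<n}"
    and es: "\<And>i. i < n \<Longrightarrow> joins E ep (es i) (xs i) (xs (Suc i)) \<and> f (es i) = orient ep (es i) (xs i) (xs (Suc i))"
  obtains f' where "unit_flow V E ep f'"
    "(\<Sum>s\<in>S. net_outflow E ep f' s) = (\<Sum>s\<in>S. net_outflow E ep f s) - 1 + (if xs n \<in> S then 1 else 0)"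
    "card {e \<in> E. f' e \<noteq> 0} < card {e \<in> E. f e \<noteq> 0}"
    "\<And>e. f' e \<noteq> 0 \<Longrightarrow> f e \<noteq> 0 \<and> e \<notin> es ` {..<n}" "\<And>e. e \<in> es ` {..<n} \<Longrightarrow> f e \<noteq> 0"
proof -
  define f' where "f' e = f e - path_flow ep n xs es e" for e
  have net: "net_outflow E ep f' x = net_outflow E ep f x - ((if x = xs 0 then 1 else 0) - (if x = xs n then 1 else 0))" for x
  proof -
    have "net_outflow E ep (path_flow ep n xs es) x = (if x = xs 0 then 1 else 0) - (if x = xs n then 1 else 0)"
      by (rule net_outflow_path_flow[OF template_finite(4)]) (use es in blast)
    then show ?thesis unfolding f'_def net_outflow_diff by simp
  qed
  have on_path: "f' e = 0" "f e \<noteq> 0" if e: "e \<in> es ` {..<n}" for e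
  proof -
    obtain i where i: "i < n" "e = es i" using e by auto
    then show "f' e = 0" using path_flow_on_path[OF inj i(1), of ep xs] es[OF i(1)] by (simp add: f'_def)
    show "f e \<noteq> 0" using i es[OF i(1)] by (simp add: orient_def split: if_splits)
  qed
  have off_path: "f' e = f e" if "e \<notin> es ` {..<n}" for e
    unfolding f'_def using path_flow_off_path[OF that] by simp
  have "f' e \<in> {-1, 0, 1}" for e
    using flow on_path off_path by (cases "e \<in> es ` {..<n}") (auto simp: unit_flow_def)
  moreover have "net_outflow E ep f' v = 0" if "v \<in> V" for v
  proof -
    have "v \<noteq> xs 0" "v \<noteq> xs n" using that ends template_disjoint(2,3) by auto
    then show ?thesis using that flow net by (simp add: unit_flow_def)
  qed
  ultimately have "unit_flow V E ep f'" by (simp add: unit_flow_def)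
  moreover have "(\<Sum>s\<in>S. net_outflow E ep f' s) = (\<Sum>s\<in>S. net_outflow E ep f s) - 1 + (if xs n \<in> S then 1 else 0)"
    using ends(2) template_finite(1) by (simp add: net sum.distrib sum_subtractf)
  moreover have support: "f e \<noteq> 0 \<and> e \<notin> es ` {..<n}" if "f' e \<noteq> 0" for e
    using that on_path off_path by fastforce
  moreover have "{e \<in> E. f' e \<noteq> 0} \<subset> {e \<in> E. f e \<noteq> 0}"
    using support on_path[of "es 0"] es[OF ends(1)] ends(1) by (auto simp: joins_def)
  then have "card {e \<in> E. f' e \<noteq> 0} < card {e \<in> E. f e \<noteq> 0}"
    using template_finite(4) by (simp add: psubset_card_mono)
  ultimately show thesis using that on_path(2) by blast
qed

text \<open>Peel off flow-carrying paths one at a time; the support of the flow shrinks in each step.\<close>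
lemma unit_flow_decomposition:
  assumes "unit_flow V E ep f" "int m \<le> (\<Sum>s\<in>S. net_outflow E ep f s)"
  shows "\<exists>lab. labelled_paths S T V E ep lab m \<and> (\<forall>e. lab e \<noteq> None \<longrightarrow> f e \<noteq> 0)"
  using assms
proof (induction "card {e \<in> E. f e \<noteq> 0}" arbitrary: f m rule: less_induct)
  case less
  note flow = less.prems(1) and val = less.prems(2)
  show ?case
  proof (cases "m = 0")
    case True
    then show ?thesis by (intro exI[of _ "\<lambda>_. None"]) (simp add: labelled_paths_def)
  next
    case False
    then obtain s0 where s0: "s0 \<in> S" "net_outflow E ep f s0 > 0"
      using val sum_nonpos[of S "net_outflow E ep f"] by (metis not_le of_nat_le_0_iff order_trans)
    obtain xs n es where path: "xs 0 = s0" "0 < n" "xs n \<in> T \<or> xs n \<in> S" "inj_on es {..<n}"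
      and es: "\<And>i. i < n \<Longrightarrow> joins E ep (es i) (xs i) (xs (Suc i)) \<and> f (es i) = orient ep (es i) (xs i) (xs (Suc i))"
      using carrying_path[OF flow s0] by blast
    obtain f' where flow': "unit_flow V E ep f'"
      and value': "(\<Sum>s\<in>S. net_outflow E ep f' s) = (\<Sum>s\<in>S. net_outflow E ep f s) - 1 + (if xs n \<in> S then 1 else 0)"
      and smaller: "card {e \<in> E. f' e \<noteq> 0} < card {e \<in> E. f e \<noteq> 0}"
      and support': "\<And>e. f' e \<noteq> 0 \<Longrightarrow> f e \<noteq> 0 \<and> e \<notin> es ` {..<n}"
      and f_on_path: "\<And>e. e \<in> es ` {..<n} \<Longrightarrow> f e \<noteq> 0"
      using unit_flow_remove_path[OF flow path(2) _ _ path(4) es] path(1,3) s0(1) by blast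
    show ?thesis
    proof (cases "xs n \<in> T")
      case True
      then have "int (m - 1) \<le> (\<Sum>s\<in>S. net_outflow E ep f' s)"
        using value' val template_disjoint(1) False by auto
      then obtain lab where lab: "labelled_paths S T V E ep lab (m - 1)" "\<forall>e. lab e \<noteq> None \<longrightarrow> f' e \<noteq> 0"
        using less.hyps[OF smaller flow'] by blast
      have "labelled_paths S T V E ep (\<lambda>e. if e \<in> es ` {..<n} then Some (m - 1) else lab e) (Suc (m - 1))"
      proof (rule labelled_paths_extend[of lab "m - 1" n xs es, OF lab(1) path(2) _ True path(4)])
        show "xs 0 \<in> S" using path(1) s0(1) by simp
        show "joins E ep (es i) (xs i) (xs (Suc i))" if "i < n" for i using es[OF that] by blast
        show "lab (es i) = None" if "i < n" for i using lab(2) support' that by blast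
      qed
      moreover have "Suc (m - 1) = m" using False by simp
      ultimately show ?thesis using lab(2) support' f_on_path by (intro exI[of _ "\<lambda>e. if e \<in> es ` {..<n} then Some (m - 1) else lab e"]) auto
    next
      case False
      then have "int m \<le> (\<Sum>s\<in>S. net_outflow E ep f' s)" using value' val path(3) by simp
      then obtain lab where "labelled_paths S T V E ep lab m" "\<forall>e. lab e \<noteq> None \<longrightarrow> f' e \<noteq> 0"
        using less.hyps[OF smaller flow'] by blast
      then show ?thesis using support' by blast
    qed
  qed
qed

subsection \<open>Rank of the path tensor network\<close>

lemma mat_rank_le_QMF:
  "mat_rank (open_indices E ep c T) (open_indices E ep c S) (contraction_entry S T V E ep c Tn) \<le> QMF S T V E ep c"
  unfolding QMF_def
proof (rule cSup_upper)
  show "bdd_above {mat_rank (open_indices E ep c T) (open_indices E ep c S) (contraction_entry S T V E ep c Tn) |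
        Tn :: 'v \<Rightarrow> ('e \<times> bool \<Rightarrow> nat) \<Rightarrow> complex. True}"
    using mat_rank_le_card[OF finite_open_indices[OF template_finite(1)]]
    by (intro bdd_aboveI[where M = "card (open_indices E ep c S)"]) auto
qed blast

lemma contraction_entry_path_tensor:
  "contraction_entry S T V E ep c (path_tensor E ep lab) IT IS =
     of_nat (card {W \<in> edge_indices E c. (\<forall>u\<in>S. W (open_edge E ep u) = IS u) \<and>
                     (\<forall>u\<in>T. W (open_edge E ep u) = IT u) \<and>
                     (\<forall>v\<in>V. colour_consistent E ep lab (restrict_to_vertex E ep W v) v)})"
proof -
  have "finite {W \<in> edge_indices E c. (\<forall>u\<in>S. W (open_edge E ep u) = IS u) \<and> (\<forall>u\<in>T. W (open_edge E ep u) = IT u)}"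
    using finite_edge_indices by simp
  then show ?thesis
    unfolding contraction_entry_def path_tensor_def prod_indicator[OF template_finite(3)]
    by (simp add: sum_indicator_eq_card conj_assoc)
qed

lemma colour_consistent_linked:
  assumes consistent: "\<forall>v\<in>V. colour_consistent E ep lab (restrict_to_vertex E ep W v) v"
    and coloured: "\<And>e j. lab e = Some j \<Longrightarrow> e \<in> E"
    and "(linked V ep lab)\<^sup>*\<^sup>* e e'"
  shows "W e = W e'"
  using assms(3)
proof (induction rule: rtranclp_induct)
  case (step y z)
  from step(2) obtain j v where j: "lab y = Some j" "lab z = Some j" and v: "v \<in> V"
      "fst (ep y) = v \<or> snd (ep y) = v" "fst (ep z) = v \<or> snd (ep z) = v"
    unfolding linked_def by blast
  have "(y, fst (ep y) \<noteq> v) \<in> ends E ep v" "(z, fst (ep z) \<noteq> v) \<in> ends E ep v"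
    using coloured[OF j(1)] coloured[OF j(2)] v by (auto simp: ends_def)
  then have "W y = W z"
    using consistent v(1) j unfolding colour_consistent_def restrict_to_vertex_def by fastforce
  then show ?case using step(3) by simp
qed simp

context
  fixes lab k d
  assumes paths: "labelled_paths S T V E ep lab k" and capacity: "\<And>e. e \<in> E \<Longrightarrow> d \<le> c e"
begin

lemma coloured_edge: "lab e = Some j \<Longrightarrow> e \<in> E \<and> j < k"
  using paths unfolding labelled_paths_def by blast

lemma colour_index_less:
  assumes "a \<in> {..<k} \<rightarrow>\<^sub>E {..<d}" "e \<in> E"
  shows "colour_index E lab a e < c e"
proof (cases "lab e")
  case None
  then show ?thesis using tmpl assms(2) by (simp add: colour_index_def tn_template_def)
next
  case (Some j)
  then have "a j < d" using coloured_edge assms(1) by (auto simp: PiE_iff)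
  then show ?thesis using Some capacity[OF assms(2)] assms(2) by (simp add: colour_index_def)
qed

lemma boundary_index_in_open_indices:
  assumes "a \<in> {..<k} \<rightarrow>\<^sub>E {..<d}" "U \<subseteq> S \<union> T"
  shows "boundary_index E ep lab U a \<in> open_indices E ep c U"
  using colour_index_less[OF assms(1)] open_edge_incident(1) assms(2)
  unfolding open_indices_def boundary_index_def by auto

lemma contraction_entry_diagonal:
  assumes "a \<in> {..<k} \<rightarrow>\<^sub>E {..<d}"
  shows "contraction_entry S T V E ep c (path_tensor E ep lab)
    (boundary_index E ep lab T a) (boundary_index E ep lab S a) \<noteq> 0"
proof -
  let ?W = "colour_index E lab a"
  have "?W \<in> edge_indices E c"
    using colour_index_less[OF assms] by (auto simp: edge_indices_def colour_index_def)
  moreover have "\<forall>v\<in>V. colour_consistent E ep lab (restrict_to_vertex E ep ?W v) v"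
    using coloured_edge
    by (auto simp: colour_consistent_def restrict_to_vertex_def ends_def colour_index_def)
  ultimately have "?W \<in> {W \<in> edge_indices E c.
      (\<forall>u\<in>S. W (open_edge E ep u) = boundary_index E ep lab S a u) \<and>
      (\<forall>u\<in>T. W (open_edge E ep u) = boundary_index E ep lab T a u) \<and>
      (\<forall>v\<in>V. colour_consistent E ep lab (restrict_to_vertex E ep W v) v)}"
    by (simp add: boundary_index_def)
  then show ?thesis
    unfolding contraction_entry_path_tensor using finite_edge_indices by (auto simp: card_eq_0_iff)
qed

text \<open>The colour j links the input carrying index b j to the output carrying index a j.\<close>
lemma contraction_entry_off_diagonal:
  assumes "a \<in> {..<k} \<rightarrow>\<^sub>E {..<d}" "b \<in> {..<k} \<rightarrow>\<^sub>E {..<d}" "a \<noteq> b"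
  shows "contraction_entry S T V E ep c (path_tensor E ep lab)
    (boundary_index E ep lab T a) (boundary_index E ep lab S b) = 0"
proof -
  obtain j where j: "j < k" "a j \<noteq> b j"
    using PiE_ext[of a "{..<k}" "\<lambda>_. {..<d}" b] assms by auto
  have "\<forall>j<k. \<exists>s\<in>S. \<exists>t\<in>T. lab (open_edge E ep s) = Some j \<and> lab (open_edge E ep t) = Some j \<and>
      (linked V ep lab)\<^sup>*\<^sup>* (open_edge E ep s) (open_edge E ep t)"
    using paths by (simp add: labelled_paths_def)
  then obtain s t where st: "s \<in> S" "t \<in> T" "lab (open_edge E ep s) = Some j" "lab (open_edge E ep t) = Some j"
      "(linked V ep lab)\<^sup>*\<^sup>* (open_edge E ep s) (open_edge E ep t)"
    using j(1) by blast
  have "{W \<in> edge_indices E c.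
      (\<forall>u\<in>S. W (open_edge E ep u) = boundary_index E ep lab S b u) \<and>
      (\<forall>u\<in>T. W (open_edge E ep u) = boundary_index E ep lab T a u) \<and>
      (\<forall>v\<in>V. colour_consistent E ep lab (restrict_to_vertex E ep W v) v)} = {}"
  proof (rule equals0I)
    fix W assume W: "W \<in> {W \<in> edge_indices E c.
      (\<forall>u\<in>S. W (open_edge E ep u) = boundary_index E ep lab S b u) \<and>
      (\<forall>u\<in>T. W (open_edge E ep u) = boundary_index E ep lab T a u) \<and>
      (\<forall>v\<in>V. colour_consistent E ep lab (restrict_to_vertex E ep W v) v)}"
    then have "W (open_edge E ep s) \<noteq> W (open_edge E ep t)"
      using st j(2) open_edge_incident(1)[of s] open_edge_incident(1)[of t]
      by (auto simp: boundary_index_def colour_index_def)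
    moreover have "W (open_edge E ep s) = W (open_edge E ep t)"
      using W coloured_edge by (intro colour_consistent_linked[OF _ _ st(5)]) auto
    ultimately show False by contradiction
  qed
  then show ?thesis unfolding contraction_entry_path_tensor by (simp only: card.empty of_nat_0)
qed

lemma labelled_paths_QMF: "d ^ k \<le> QMF S T V E ep c"
proof -
  have "card ({..<k} \<rightarrow>\<^sub>E {..<d}) \<le> mat_rank (open_indices E ep c T) (open_indices E ep c S)
      (contraction_entry S T V E ep c (path_tensor E ep lab))"
    using boundary_index_in_open_indices contraction_entry_diagonal contraction_entry_off_diagonal
    by (intro card_le_mat_rank[where g = "boundary_index E ep lab S" and h = "boundary_index E ep lab T"]
        finite_open_indices template_finite(1)) auto
  also have "\<dots> \<le> QMF S T V E ep c" by (rule mat_rank_le_QMF)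
  finally show ?thesis by (simp add: card_PiE)
qed

end

end

theorem proposition3p11:
  fixes S T V :: "'v set" and E :: "'e set" and ep :: "'e \<Rightarrow> 'v \<times> 'v" and c :: "'e \<Rightarrow> nat"
  assumes "tn_template S T V E ep c"
  shows "QMF S T V E ep c \<ge> (Min (c ` E)) ^ (Min {card C | C. edge_cut_set S T V E ep C})"
proof -
  interpret tensor_network S T V E ep c using assms by (rule tensor_network.intro)
  define k where "k = Min {card C | C. edge_cut_set S T V E ep C}"
  have "{card C | C. edge_cut_set S T V E ep C} \<subseteq> {..card E}"
    using card_mono[OF template_finite(4)] by (auto simp: edge_cut_set_def)
  then have cut_bound: "k \<le> card C" if "edge_cut_set S T V E ep C" for C
    unfolding k_def using that by (intro Min_le) (auto intro: finite_subset)
  obtain f where "unit_flow V E ep f" "(\<Sum>s\<in>S. net_outflow E ep f s) = int k"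
    using unit_flow_of_cut_bound cut_bound by blast
  then obtain lab where "labelled_paths S T V E ep lab k"
    using unit_flow_decomposition[of f k] by auto
  moreover have "Min (c ` E) \<le> c e" if "e \<in> E" for e
    using template_finite(4) that by simp
  ultimately show ?thesis unfolding k_def by (rule labelled_paths_QMF)
qed

end
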